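(* Let $\Delta=\{x\in\mathbb{R}^n:\ \ell_i(x)\ge0,\ i=1,\dots,d\}$ be a compact $n$-dimensional Delzant polytope with lattice distances $\ell_i(x)=c_i-\langle u_i,x\rangle$ to its facets, and let $\varphi(x,y)=\sum_{i=1}^d \ell_i(x)\log\ell_i(y)-\ell_i(y)$, with the convention that terms with $\ell_i(x)=0$ are omitted from the first sum (i.e. $0\cdot\log(\cdot)=0$). Let $F$ be a boundary face of $\Delta$ and $x$ a point in the relative interior of $F$. Then the restriction of $y\mapsto\varphi(x,y)$ to $F$ has a unique critical point, at $y=x$, and this point is the unique global maximum of $y\mapsto\varphi(x,y)$ on $\Delta$. Moreover, the derivatives of $y\mapsto\varphi(x,y)$ at $y=x$ in directions normal to $F$ are nonzero.
   Context: A Delzant polytope is a compact convex polytope $\{x:\langle u_i,x\rangle\le c_i\}$ with $u_i\in(\mathbb{Z}^n)^*$ primitive outward facet normals, $c_i\in\mathbb{Z}$, each vertex lying on exactly $n$ facets whose normals form a $\mathbb{Z}$-basis. A face $F$ is the set where $\ell_i=0$ for $i$ in some index set $I$. *)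

theory Defs
  imports "HOL-Analysis.Analysis"
begin

definition lat_dist :: "(nat \<Rightarrow> real^'n) \<Rightarrow> (nat \<Rightarrow> real) \<Rightarrow> nat \<Rightarrow> real^'n \<Rightarrow> real" where
  "lat_dist u c i x = c i - u i \<bullet> x"

definition dpoly :: "(nat \<Rightarrow> real^'n) \<Rightarrow> (nat \<Rightarrow> real) \<Rightarrow> nat \<Rightarrow> (real^'n) set" where
  "dpoly u c d = {x. \<forall>i<d. 0 \<le> lat_dist u c i x}"

definition int_vec :: "real^'n \<Rightarrow> bool" where
  "int_vec v \<longleftrightarrow> (\<forall>k. v $ k \<in> \<int>)"

definition primitive_vec :: "real^'n \<Rightarrow> bool" where
  "primitive_vec v \<longleftrightarrow> int_vec v \<and> (\<forall>w (m::nat). int_vec w \<and> v = of_nat m *\<^sub>R w \<longrightarrow> m = 1)"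

text \<open>Delzant polytope data: u_i primitive integral outward facet normals, c_i integers,
  compact n-dimensional polytope, each inequality cuts out a facet (distinct for distinct i),
  each vertex lies on exactly n facets whose normals form a Z-basis of Z^n.\<close>
definition delzant :: "(nat \<Rightarrow> real^'n) \<Rightarrow> (nat \<Rightarrow> real) \<Rightarrow> nat \<Rightarrow> bool" where
  "delzant u c d \<longleftrightarrow>
     (\<forall>i<d. primitive_vec (u i) \<and> c i \<in> \<int>) \<and>
     compact (dpoly u c d) \<and> interior (dpoly u c d) \<noteq> {} \<and>
     (\<forall>i<d. {x \<in> dpoly u c d. lat_dist u c i x = 0} facet_of dpoly u c d) \<and>
     (\<forall>i<d. \<forall>j<d. i \<noteq> j \<longrightarrow>
        {x \<in> dpoly u c d. lat_dist u c i x = 0} \<noteq> {x \<in> dpoly u c d. lat_dist u c j x = 0}) \<and>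
     (\<forall>v. v extreme_point_of (dpoly u c d) \<longrightarrow>
        card {i. i < d \<and> lat_dist u c i v = 0} = CARD('n) \<and>
        (\<forall>w. int_vec w \<longrightarrow> (\<exists>a::nat \<Rightarrow> int.
            w = (\<Sum>i\<in>{i. i < d \<and> lat_dist u c i v = 0}. of_int (a i) *\<^sub>R u i))))"

definition xlogy :: "real \<Rightarrow> real \<Rightarrow> ereal" where
  "xlogy a b = (if a = 0 then 0 else if b \<le> 0 then -\<infinity> else ereal (a * ln b))"

definition phi :: "(nat \<Rightarrow> real^'n) \<Rightarrow> (nat \<Rightarrow> real) \<Rightarrow> nat \<Rightarrow> real^'n \<Rightarrow> real^'n \<Rightarrow> ereal" where
  "phi u c d x y = (\<Sum>i<d. xlogy (lat_dist u c i x) (lat_dist u c i y))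
                   - ereal (\<Sum>i<d. lat_dist u c i y)"

end

theory Submission
  imports Defs
begin

text \<open>Where every \<open>\<ell>\<^sub>i\<close> with \<open>\<ell>\<^sub>i(x) > 0\<close> is positive at \<open>y\<close>, \<open>\<phi>(x,y)\<close> is finite and
  smooth in \<open>y\<close>, and each of its terms \<open>a log b - b\<close> (with \<open>a = \<ell>\<^sub>i(x)\<close>, \<open>b = \<ell>\<^sub>i(y)\<close>)
  is maximal exactly at \<open>b = a\<close>. Since the polytope is bounded, its normals span, so
  \<open>y = x\<close> is the unique point where all \<open>\<ell>\<^sub>i\<close> agree with those of \<open>x\<close>: the strict
  maximum. At \<open>y = x\<close> the derivative in direction \<open>a - x\<close> is \<open>-\<Sum>\<ell>\<^sub>i(a)\<close> over the facets
  containing \<open>x\<close>; for \<open>x\<close> in the relative interior of \<open>F\<close> these \<open>\<ell>\<^sub>i\<close> vanish on all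
  of \<open>F\<close> and are nonnegative on the polytope, so the sum vanishes on \<open>F\<close> and not in
  directions leaving its affine hull. For \<open>y \<noteq> x\<close> in \<open>F\<close>, the derivative in direction
  \<open>x - y\<close> is a sum of nonnegative terms that all vanish only if \<open>y = x\<close>.\<close>

lemma sum_eq_MInfty:
  fixes f :: "'a \<Rightarrow> ereal"
  assumes "finite A" "\<forall>i\<in>A. f i \<noteq> \<infinity>" "\<exists>i\<in>A. f i = -\<infinity>"
  shows "sum f A = -\<infinity>"
  using assms
proof (induction A rule: finite_induct)
  case (insert a A)
  then have "sum f A \<noteq> \<infinity>" by (auto simp: sum_Pinfty)
  with insert show ?case by (cases "f a = -\<infinity>") auto
qed simp

lemma mult_ln_minus_less:
  fixes a b :: real
  assumes "0 < a" "0 < b" "b \<noteq> a"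
  shows "a * ln b - b < a * ln a - a"
proof -
  have "ln b - ln a < (b - a) / a" using ln_diff_less assms by blast
  then have "a * (ln b - ln a) < b - a" using assms(1) by (simp add: field_simps)
  then show ?thesis by (simp add: algebra_simps)
qed

lemma has_derivative_within_convex_unique:
  fixes g :: "'a::real_normed_vector \<Rightarrow> real"
  assumes "convex F" "y \<in> F" "x \<in> F"
    "(g has_derivative f1) (at y within F)" "(g has_derivative f2) (at y within F)"
  shows "f1 (x - y) = f2 (x - y)"
proof -
  define p where "p = (\<lambda>t::real. y + t *\<^sub>R (x - y))"
  have p: "(p has_derivative (\<lambda>t. t *\<^sub>R (x - y))) (at 0 within cbox 0 1)"
    unfolding p_def by (auto intro!: derivative_eq_intros)
  have segment: "p ` cbox 0 1 \<subseteq> F"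
  proof
    fix z assume "z \<in> p ` cbox 0 1"
    then obtain t where "0 \<le> t" "t \<le> 1" "z = (1 - t) *\<^sub>R y + t *\<^sub>R x"
      by (auto simp: p_def scaleR_diff_right scaleR_diff_left)
    then show "z \<in> F" using assms(1-3) by (simp add: convex_def)
  qed
  have along: "((\<lambda>t. g (p t)) has_derivative (\<lambda>t. f (t *\<^sub>R (x - y)))) (at 0 within cbox 0 1)"
    if "(g has_derivative f) (at y within F)" for f
  proof (rule has_derivative_in_compose[OF p])
    show "(g has_derivative f) (at (p 0) within p ` cbox 0 1)"
      using has_derivative_subset[OF that segment] by (simp add: p_def)
  qed
  have "(\<lambda>t. f1 (t *\<^sub>R (x - y))) = (\<lambda>t. f2 (t *\<^sub>R (x - y)))"
    using along[OF assms(4)] along[OF assms(5)]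
    by (rule frechet_derivative_unique_within_closed_interval[rotated 2]) auto
  then show ?thesis by (metis scaleR_one)
qed

definition phi_domain :: "(nat \<Rightarrow> real^'n) \<Rightarrow> (nat \<Rightarrow> real) \<Rightarrow> nat \<Rightarrow> real^'n \<Rightarrow> (real^'n) set" where
  "phi_domain u c d x = {z. \<forall>i<d. lat_dist u c i x \<noteq> 0 \<longrightarrow> 0 < lat_dist u c i z}"

definition phi_real :: "(nat \<Rightarrow> real^'n) \<Rightarrow> (nat \<Rightarrow> real) \<Rightarrow> nat \<Rightarrow> real^'n \<Rightarrow> real^'n \<Rightarrow> real" where
  "phi_real u c d x z = (\<Sum>i<d. (if lat_dist u c i x = 0 then 0
      else lat_dist u c i x * ln (lat_dist u c i z)) - lat_dist u c i z)"

definition phi_deriv :: "(nat \<Rightarrow> real^'n) \<Rightarrow> (nat \<Rightarrow> real) \<Rightarrow> nat \<Rightarrow> real^'n \<Rightarrow> real^'n \<Rightarrow> real^'n \<Rightarrow> real" where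
  "phi_deriv u c d x z h = (\<Sum>i<d. (if lat_dist u c i x = 0 then 0
      else - (lat_dist u c i x * (u i \<bullet> h) / lat_dist u c i z)) + u i \<bullet> h)"

lemma phi_eq_ereal_phi_real:
  assumes "z \<in> phi_domain u c d x"
  shows "phi u c d x z = ereal (phi_real u c d x z)"
proof -
  have "(\<Sum>i<d. xlogy (lat_dist u c i x) (lat_dist u c i z)) =
     (\<Sum>i<d. ereal (if lat_dist u c i x = 0 then 0 else lat_dist u c i x * ln (lat_dist u c i z)))"
    using assms by (intro sum.cong) (auto simp: xlogy_def phi_domain_def)
  then show ?thesis unfolding phi_def phi_real_def by (simp add: sum_subtractf)
qed

lemma phi_eq_MInfty_iff: "phi u c d x z = -\<infinity> \<longleftrightarrow> z \<notin> phi_domain u c d x"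
proof
  assume "z \<notin> phi_domain u c d x"
  then obtain i where "i < d" "lat_dist u c i x \<noteq> 0" "lat_dist u c i z \<le> 0"
    by (force simp: phi_domain_def)
  then have "(\<Sum>i<d. xlogy (lat_dist u c i x) (lat_dist u c i z)) = -\<infinity>"
    by (intro sum_eq_MInfty) (auto simp: xlogy_def)
  then show "phi u c d x z = -\<infinity>" unfolding phi_def by simp
next
  assume "phi u c d x z = -\<infinity>"
  then show "z \<notin> phi_domain u c d x" using phi_eq_ereal_phi_real by fastforce
qed

lemma self_in_phi_domain: "x \<in> dpoly u c d \<Longrightarrow> x \<in> phi_domain u c d x"
  by (force simp: phi_domain_def dpoly_def)

lemma open_phi_domain: "open (phi_domain u c d x)"
proof -
  have "phi_domain u c d x = (\<Inter>i\<in>{i. i < d \<and> lat_dist u c i x \<noteq> 0}. {z. u i \<bullet> z < c i})"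
    by (auto simp: phi_domain_def lat_dist_def)
  then show ?thesis by (auto intro: open_halfspace_lt)
qed

lemma has_derivative_lat_dist: "(lat_dist u c i has_derivative (\<lambda>h. - (u i \<bullet> h))) F"
  unfolding lat_dist_def[abs_def] by (auto intro!: derivative_eq_intros)

lemma has_derivative_phi_real:
  assumes "z \<in> phi_domain u c d x"
  shows "(phi_real u c d x has_derivative phi_deriv u c d x z) (at z)"
  unfolding phi_real_def[abs_def] phi_deriv_def[abs_def]
proof (rule has_derivative_sum)
  fix i assume "i \<in> {..<d}"
  then have "lat_dist u c i x \<noteq> 0 \<Longrightarrow> 0 < lat_dist u c i z"
    using assms by (simp add: phi_domain_def)
  then show "((\<lambda>z. (if lat_dist u c i x = 0 then 0 else lat_dist u c i x * ln (lat_dist u c i z))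
      - lat_dist u c i z) has_derivative (\<lambda>h. (if lat_dist u c i x = 0 then 0
      else - (lat_dist u c i x * (u i \<bullet> h) / lat_dist u c i z)) + u i \<bullet> h)) (at z)"
    by (cases "lat_dist u c i x = 0")
      (auto intro!: derivative_eq_intros has_derivative_lat_dist simp: field_simps)
qed

lemma has_derivative_phi:
  assumes "z \<in> phi_domain u c d x"
  shows "((\<lambda>z. real_of_ereal (phi u c d x z)) has_derivative phi_deriv u c d x z) (at z)"
  using has_derivative_phi_real[OF assms] open_phi_domain assms
  by (rule has_derivative_transform_within_open) (simp add: phi_eq_ereal_phi_real)

lemma bounded_dpoly_orthogonal_normals_imp_zero:
  assumes "bounded (dpoly u c d)" "x \<in> dpoly u c d" "\<forall>i<d. u i \<bullet> v = 0"
  shows "v = 0"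
proof (rule ccontr)
  assume "v \<noteq> 0"
  obtain B where B: "\<forall>z\<in>dpoly u c d. norm z \<le> B" using assms(1) bounded_iff by blast
  define t where "t = (B + norm x + 1) / norm v"
  have "x + t *\<^sub>R v \<in> dpoly u c d"
    using assms(2,3) by (auto simp: dpoly_def lat_dist_def inner_add_right)
  then have "norm (x + t *\<^sub>R v) \<le> B" using B by blast
  moreover have "norm (t *\<^sub>R v) \<le> norm (x + t *\<^sub>R v) + norm x"
    by (metis add_diff_cancel_left' norm_triangle_ineq4)
  moreover have "0 \<le> B" using B assms(2) norm_ge_zero order_trans by blast
  then have "norm (t *\<^sub>R v) = B + norm x + 1" using \<open>v \<noteq> 0\<close> by (simp add: t_def)
  ultimately show False by linarith
qed

lemma bounded_dpoly_lat_dist_eqD: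
  assumes "bounded (dpoly u c d)" "x \<in> dpoly u c d" "\<forall>i<d. lat_dist u c i y = lat_dist u c i x"
  shows "y = x"
  using bounded_dpoly_orthogonal_normals_imp_zero[OF assms(1,2), of "y - x"] assms(3)
  by (auto simp: lat_dist_def inner_diff_right)

lemma convex_dpoly_face: "convex {y \<in> dpoly u c d. \<forall>i\<in>I. lat_dist u c i y = 0}"
proof -
  have "{y \<in> dpoly u c d. \<forall>i\<in>I. lat_dist u c i y = 0} =
     (\<Inter>i\<in>{..<d}. {y. u i \<bullet> y \<le> c i}) \<inter> (\<Inter>i\<in>I. {y. u i \<bullet> y = c i})"
    by (auto simp: dpoly_def lat_dist_def)
  then show ?thesis by (auto intro!: convex_Int convex_INT convex_halfspace_le convex_hyperplane)
qed

text \<open>A point of the relative interior can be pushed a little beyond itself, away from any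
  \<open>a \<in> F\<close>; nonnegativity of the affine function \<open>\<ell>\<^sub>i\<close> there forces \<open>\<ell>\<^sub>i(a) \<le> 0\<close>.\<close>
lemma lat_dist_zero_on_convex:
  assumes "convex F" "x \<in> rel_interior F" "a \<in> F"
    "\<forall>z\<in>F. 0 \<le> lat_dist u c i z" "lat_dist u c i x = 0"
  shows "lat_dist u c i a = 0"
proof -
  have "a \<in> affine hull F" using assms(3) by (rule hull_inc)
  then obtain m where "1 < m" "\<forall>e. 1 < e \<and> e \<le> m \<longrightarrow> (1 - e) *\<^sub>R a + e *\<^sub>R x \<in> F"
    using convex_rel_interior_if[OF assms(1,2)] by blast
  then have m: "1 < m" "(1 - m) *\<^sub>R a + m *\<^sub>R x \<in> F" by auto
  have "lat_dist u c i ((1 - m) *\<^sub>R a + m *\<^sub>R x) = (1 - m) * lat_dist u c i a"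
    using assms(5) by (simp add: lat_dist_def algebra_simps)
  moreover have "0 \<le> lat_dist u c i ((1 - m) *\<^sub>R a + m *\<^sub>R x)" using assms(4) m(2) by blast
  ultimately have "lat_dist u c i a \<le> 0" using m(1) by (simp add: zero_le_mult_iff)
  then show ?thesis using assms(3,4) by fastforce
qed

lemma phi_less_phi_self:
  assumes "bounded (dpoly u c d)" "x \<in> dpoly u c d" "y \<in> dpoly u c d" "y \<noteq> x"
  shows "phi u c d x y < phi u c d x x"
proof -
  let ?L = "lat_dist u c"
  have x: "x \<in> phi_domain u c d x" using assms(2) by (rule self_in_phi_domain)
  show ?thesis
  proof (cases "y \<in> phi_domain u c d x")
    case False
    then show ?thesis using x by (simp add: phi_eq_ereal_phi_real phi_eq_MInfty_iff[THEN iffD2])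
  next
    case y_dom: True
    let ?f = "\<lambda>z i. (if ?L i x = 0 then 0 else ?L i x * ln (?L i z)) - ?L i z"
    have term_less: "?f y i < ?f x i" if "i < d" "?L i y \<noteq> ?L i x" for i
    proof (cases "?L i x = 0")
      case True
      then show ?thesis using that assms(3) by (simp add: dpoly_def less_le)
    next
      case False
      then have "0 < ?L i x" "0 < ?L i y"
        using that(1) assms(2) y_dom by (auto simp: dpoly_def phi_domain_def less_le)
      then show ?thesis using False mult_ln_minus_less that(2) by simp
    qed
    have term_le: "?f y i \<le> ?f x i" if "i < d" for i
      using term_less[OF that] by (cases "?L i y = ?L i x") (simp_all add: less_imp_le)
    obtain i where "i < d" "?L i y \<noteq> ?L i x"
      using bounded_dpoly_lat_dist_eqD[OF assms(1,2)] assms(4) by blast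
    have "phi_real u c d x y < phi_real u c d x x"
      unfolding phi_real_def
      by (rule sum_strict_mono_ex1)
        (simp, use term_le in blast, use term_less \<open>i < d\<close> \<open>?L i y \<noteq> ?L i x\<close> in blast)
    then show ?thesis using y_dom x by (simp add: phi_eq_ereal_phi_real)
  qed
qed

lemma phi_deriv_self_eq_zero_iff:
  assumes "a \<in> dpoly u c d"
  shows "phi_deriv u c d x x (a - x) = 0
    \<longleftrightarrow> (\<forall>i<d. lat_dist u c i x = 0 \<longrightarrow> lat_dist u c i a = 0)"
proof -
  have "phi_deriv u c d x x (a - x) = - (\<Sum>i<d. if lat_dist u c i x = 0 then lat_dist u c i a else 0)"
    unfolding phi_deriv_def sum_negf[symmetric]
    by (intro sum.cong) (auto simp: lat_dist_def inner_diff_right)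
  moreover have "(\<Sum>i<d. if lat_dist u c i x = 0 then lat_dist u c i a else 0) = 0
      \<longleftrightarrow> (\<forall>i<d. lat_dist u c i x = 0 \<longrightarrow> lat_dist u c i a = 0)"
    using assms by (subst sum_nonneg_eq_0_iff) (auto simp: dpoly_def)
  ultimately show ?thesis by simp
qed

text \<open>Moving from \<open>y\<close> towards \<open>x\<close>, each term contributes \<open>\<ell>\<^sub>i(y)\<close> if \<open>\<ell>\<^sub>i(x) = 0\<close> and
  \<open>(\<ell>\<^sub>i(y) - \<ell>\<^sub>i(x))\<^sup>2 / \<ell>\<^sub>i(y)\<close> otherwise.\<close>
lemma phi_deriv_towards_eq_zero_iff:
  assumes "y \<in> dpoly u c d" "y \<in> phi_domain u c d x"
  shows "phi_deriv u c d x y (x - y) = 0 \<longleftrightarrow> (\<forall>i<d. lat_dist u c i y = lat_dist u c i x)"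
proof -
  let ?L = "lat_dist u c"
  let ?t = "\<lambda>i. if ?L i x = 0 then ?L i y else (?L i y - ?L i x)\<^sup>2 / ?L i y"
  have pos: "?L i x \<noteq> 0 \<Longrightarrow> 0 < ?L i y" and nonneg: "0 \<le> ?L i y" if "i < d" for i
    using assms that by (auto simp: phi_domain_def dpoly_def)
  have "phi_deriv u c d x y (x - y) = (\<Sum>i<d. ?t i)"
    unfolding phi_deriv_def
  proof (intro sum.cong refl)
    fix i assume "i \<in> {..<d}"
    then have "?L i x \<noteq> 0 \<Longrightarrow> 0 < ?L i y" using pos by blast
    moreover have ud: "u i \<bullet> (x - y) = ?L i y - ?L i x" by (simp add: lat_dist_def inner_diff_right)
    ultimately show "(if ?L i x = 0 then 0 else - (?L i x * (u i \<bullet> (x - y)) / ?L i y))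
        + u i \<bullet> (x - y) = ?t i"
      unfolding ud by (cases "?L i x = 0") (simp_all add: field_simps power2_eq_square)
  qed
  moreover have "(\<Sum>i<d. ?t i) = 0 \<longleftrightarrow> (\<forall>i<d. ?t i = 0)"
    using pos nonneg by (subst sum_nonneg_eq_0_iff) auto
  moreover have "?t i = 0 \<longleftrightarrow> ?L i y = ?L i x" if "i < d" for i
    using pos[OF that] by auto
  ultimately show ?thesis by simp
qed

lemma phi_critical_on_convex_iff:
  assumes "bounded (dpoly u c d)" "convex F" "F \<subseteq> dpoly u c d" "x \<in> rel_interior F" "y \<in> F"
  shows "(phi u c d x y \<noteq> -\<infinity> \<and>
            (\<exists>f'. ((\<lambda>z. real_of_ereal (phi u c d x z)) has_derivative f') (at y within F)
                  \<and> (\<forall>a\<in>F. f' (a - y) = 0))) \<longleftrightarrow> y = x"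
  (is "?critical \<longleftrightarrow> _")
proof -
  have xF: "x \<in> F" using assms(4) rel_interior_subset by blast
  then have x: "x \<in> dpoly u c d" using assms(3) by blast
  have "y = x" if ?critical
  proof -
    have y: "y \<in> phi_domain u c d x" using that by (simp add: phi_eq_MInfty_iff)
    from that obtain f' where f': "((\<lambda>z. real_of_ereal (phi u c d x z)) has_derivative f') (at y within F)"
      "\<forall>a\<in>F. f' (a - y) = 0" by blast
    have "phi_deriv u c d x y (x - y) = f' (x - y)"
      using has_derivative_at_withinI[OF has_derivative_phi[OF y]] f'(1)
      by (rule has_derivative_within_convex_unique[OF assms(2,5) xF])
    also have "\<dots> = 0" using f'(2) xF by blast
    finally have "\<forall>i<d. lat_dist u c i y = lat_dist u c i x"
      using phi_deriv_towards_eq_zero_iff[OF _ y] assms(3,5) by blast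
    then show "y = x" by (rule bounded_dpoly_lat_dist_eqD[OF assms(1) x])
  qed
  moreover have ?critical if "y = x"
  proof -
    have "phi_deriv u c d x x (a - x) = 0" if "a \<in> F" for a
    proof -
      have "\<forall>z\<in>F. 0 \<le> lat_dist u c i z" if "i < d" for i
        using assms(3) that by (auto simp: dpoly_def)
      then show ?thesis
        using phi_deriv_self_eq_zero_iff lat_dist_zero_on_convex[OF assms(2,4) \<open>a \<in> F\<close>]
          \<open>a \<in> F\<close> assms(3) by blast
    qed
    moreover have "phi u c d x x \<noteq> -\<infinity>"
      using self_in_phi_domain[OF x] by (simp add: phi_eq_MInfty_iff)
    ultimately show ?critical
      using that has_derivative_at_withinI[OF has_derivative_phi[OF self_in_phi_domain[OF x]]]
      by blast
  qed
  ultimately show ?thesis by blast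
qed

lemma phi_normal_derivative_nonzero:
  assumes "I \<subseteq> {..<d}" "F = {y \<in> dpoly u c d. \<forall>i\<in>I. lat_dist u c i y = 0}" "x \<in> F"
  shows "\<exists>f'. ((\<lambda>z. real_of_ereal (phi u c d x z)) has_derivative f') (at x)
              \<and> (\<forall>a\<in>dpoly u c d. a \<notin> affine hull F \<longrightarrow> f' (a - x) \<noteq> 0)"
proof -
  have x: "x \<in> dpoly u c d" "\<forall>i\<in>I. lat_dist u c i x = 0" using assms(2,3) by auto
  have "a \<in> F" if "a \<in> dpoly u c d" "phi_deriv u c d x x (a - x) = 0" for a
  proof -
    have "\<forall>i\<in>I. lat_dist u c i a = 0"
      using that x(2) assms(1) phi_deriv_self_eq_zero_iff[OF that(1)] by blast
    then show ?thesis using that(1) assms(2) by blast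
  qed
  then show ?thesis
    using has_derivative_phi[OF self_in_phi_domain[OF x(1)]] hull_inc[of _ F] by blast
qed

theorem lemma4p2:
  fixes u :: "nat \<Rightarrow> real^'n" and c :: "nat \<Rightarrow> real" and d :: nat
    and I :: "nat set" and F :: "(real^'n) set" and x :: "real^'n"
  assumes "delzant u c d"
    and "I \<subseteq> {..<d}"
    and "F = {y \<in> dpoly u c d. \<forall>i\<in>I. lat_dist u c i y = 0}"
    and "F \<noteq> dpoly u c d"
    and "x \<in> rel_interior F"
  shows "(\<forall>y\<in>F. (phi u c d x y \<noteq> -\<infinity> \<and>
            (\<exists>f'. ((\<lambda>z. real_of_ereal (phi u c d x z)) has_derivative f') (at y within F)
                  \<and> (\<forall>a\<in>F. f' (a - y) = 0))) \<longleftrightarrow> y = x)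
       \<and> (\<forall>y\<in>dpoly u c d. y \<noteq> x \<longrightarrow> phi u c d x y < phi u c d x x)
       \<and> (\<exists>f'. ((\<lambda>z. real_of_ereal (phi u c d x z)) has_derivative f') (at x)
              \<and> (\<forall>a\<in>dpoly u c d. a \<notin> affine hull F \<longrightarrow> f' (a - x) \<noteq> 0))"
proof -
  have bounded: "bounded (dpoly u c d)"
    using assms(1) compact_imp_bounded unfolding delzant_def by blast
  have convex: "convex F" and sub: "F \<subseteq> dpoly u c d"
    using convex_dpoly_face assms(3) by auto
  have "x \<in> F" using assms(5) rel_interior_subset by blast
  then show ?thesis
    using phi_critical_on_convex_iff[OF bounded convex sub assms(5)]
      phi_less_phi_self[OF bounded] phi_normal_derivative_nonzero[OF assms(2,3)] sub
    by blast
qed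

end
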